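(* Let $(G,R,\omega)$ be a metric RPP instance. Let $v$ be a vertex to which vertex extraction (as defined below) is applicable, and let $R'$ be a result of extracting $v$ from $G\langle R\rangle$. Then: (i) $V(R')=V(R)\setminus\{v\}$; (ii) $\omega(R')\le\omega(R)$ and $|R'|\le|R|$; (iii) each vertex of $G\langle R'\rangle$ is balanced in $G\langle R'\rangle$ if and only if it is balanced in $G\langle R\rangle$; (iv) two vertices of $G\langle R'\rangle$ are connected in $G\langle R'\rangle$ if and only if they are connected in $G\langle R\rangle$; (v) every multiset $S$ of edges with $V(S)\subseteq V(R')$ is an Eulerian extension for $(G,R',\omega)$ if and only if it is one for $(G,R,\omega)$.
   Context: An RPP instance is a triple $(G,R,\omega)$, where $G=(V,E)$ is an undirected multigraph, $\omega\colon E\to\mathbb{N}$ assigns weights (parallel edges have equal weight), and $R$ is a nonempty multiset of edges of $G$. The instance is metric if $G$ contains an edge between any two vertices and the weights satisfy the triangle inequality $\omega(\{u,w\})\le\omega(\{u,v\})+\omega(\{v,w\})$ for all $u,v,w\in V$. For a multiset $X$ of edges: - $\omega(X)$ and $|X|$ are weight and cardinality with multiplicity; - $V(X)$ is the set of vertices incident to edges of $X$; - $G\langle X\rangle=(V(X),X)$; - $\uplus$ and $\setminus$ denote multiset sum and difference. A vertex is balanced if its degree is even (a loop counts 2). A multigraph without isolated vertices is Eulerian if it is connected and all vertices are balanced. An Eulerian extension for $(G,R,\omega)$ is a multiset $S$ of edges with $G\langle R\uplus S\rangle$ Eulerian. A block is a maximal subgraph without cut vertices. Vertex extraction. Let $v$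 be a vertex that is balanced in $G\langle R\rangle$ and lies in a connected component of $G\langle R\rangle$ with at least three vertices. Suppose moreover that $v$ is either not a cut vertex of $G\langle R\rangle$, or a cut vertex contained in exactly two blocks of $G\langle R\rangle$. Let $R_v\subseteq R$ be the required edges incident to $v$. (a) If $v$ is not a cut vertex of $G\langle R\rangle$: let $M_v$ be any perfect matching (of edges of $G$) on the set of vertices other than $v$ that are incident to an odd number of edges of $R_v$. The result is $R'=(R\setminus R_v)\uplus M_v$. (b) If $v$ is a cut vertex contained in exactly two blocks $A$ and $B$: let $a\ne v$ be a neighbor of $v$ in $A$ and $b\ne v$ a neighbor of $v$ in $B$, and let $R''=(R\setminus\{\{a,v\},\{b,v\}\})\uplus\{\{a,b\}\}$. If $v\notin V(R'')$, the result is $R''$. Otherwise $v$ is not a cut vertex of $G\langle R''\rangle$, and the result is the result of extracting $v$ from $G\langle R''\rangle$ according to (a). *)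

theory Defs
  imports Main "HOL-Library.Multiset" "HOL-Library.Uprod"
begin

text \<open>Since parallel edges have equal weight, a multigraph edge is identified with the
unordered pair of its endpoints; a multiset of edges is a multiset of such pairs.\<close>

type_synonym 'v edge = "'v uprod"

definition verts :: "'v edge multiset \<Rightarrow> 'v set" where
  "verts X = (\<Union>e\<in>set_mset X. set_uprod e)"

definition deg :: "'v edge multiset \<Rightarrow> 'v \<Rightarrow> nat" where
  "deg X u = (\<Sum>e\<in>#X. (if e = Upair u u then 2 else if u \<in> set_uprod e then 1 else 0))"

definition balanced :: "'v edge multiset \<Rightarrow> 'v \<Rightarrow> bool" where
  "balanced X u \<longleftrightarrow> even (deg X u)"

definition reach :: "'v edge multiset \<Rightarrow> 'v \<Rightarrow> 'v \<Rightarrow> bool" where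
  "reach X u w \<longleftrightarrow> (u, w) \<in> {(a, b). Upair a b \<in># X}\<^sup>*"

text \<open>G<X> is Eulerian (it has no isolated vertices by construction)\<close>
definition eulerian :: "'v edge multiset \<Rightarrow> bool" where
  "eulerian X \<longleftrightarrow> (\<forall>u\<in>verts X. \<forall>w\<in>verts X. reach X u w) \<and> (\<forall>u\<in>verts X. balanced X u)"

definition eulerian_extension :: "'v edge set \<Rightarrow> 'v edge multiset \<Rightarrow> 'v edge multiset \<Rightarrow> bool" where
  "eulerian_extension E R S \<longleftrightarrow> set_mset S \<subseteq> E \<and> eulerian (R + S)"

definition rpp_instance :: "'v set \<Rightarrow> 'v edge set \<Rightarrow> ('v edge \<Rightarrow> nat) \<Rightarrow> 'v edge multiset \<Rightarrow> bool" where
  "rpp_instance V E \<omega> R \<longleftrightarrow> finite V \<and> (\<forall>e\<in>E. set_uprod e \<subseteq> V) \<and> R \<noteq> {#} \<and> set_mset R \<subseteq> E"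

definition metric_instance :: "'v set \<Rightarrow> 'v edge set \<Rightarrow> ('v edge \<Rightarrow> nat) \<Rightarrow> 'v edge multiset \<Rightarrow> bool" where
  "metric_instance V E \<omega> R \<longleftrightarrow> rpp_instance V E \<omega> R \<and>
     (\<forall>u\<in>V. \<forall>w\<in>V. u \<noteq> w \<longrightarrow> Upair u w \<in> E) \<and>
     (\<forall>u\<in>V. \<forall>v\<in>V. \<forall>w\<in>V. Upair u w \<in> E \<longrightarrow> Upair u v \<in> E \<longrightarrow> Upair v w \<in> E \<longrightarrow>
        \<omega> (Upair u w) \<le> \<omega> (Upair u v) + \<omega> (Upair v w))"

definition remove_vertex :: "'v \<Rightarrow> 'v edge multiset \<Rightarrow> 'v edge multiset" where
  "remove_vertex x X = filter_mset (\<lambda>e. x \<notin> set_uprod e) X"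

definition ncomp :: "'v set \<Rightarrow> 'v edge multiset \<Rightarrow> nat" where
  "ncomp VH EH = card (VH // {(a, b). a \<in> VH \<and> b \<in> VH \<and> reach EH a b})"

definition cut_vertex :: "'v set \<Rightarrow> 'v edge multiset \<Rightarrow> 'v \<Rightarrow> bool" where
  "cut_vertex VH EH x \<longleftrightarrow> x \<in> VH \<and> ncomp (VH - {x}) (remove_vertex x EH) > ncomp VH EH"

definition subgraph_of :: "'v edge multiset \<Rightarrow> 'v set \<Rightarrow> 'v edge multiset \<Rightarrow> bool" where
  "subgraph_of R VH EH \<longleftrightarrow> VH \<subseteq> verts R \<and> EH \<subseteq># R \<and> verts EH \<subseteq> VH"

definition connected_graph :: "'v set \<Rightarrow> 'v edge multiset \<Rightarrow> bool" where
  "connected_graph VH EH \<longleftrightarrow> VH \<noteq> {} \<and> (\<forall>a\<in>VH. \<forall>b\<in>VH. reach EH a b)"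

definition block_candidate :: "'v edge multiset \<Rightarrow> 'v set \<Rightarrow> 'v edge multiset \<Rightarrow> bool" where
  "block_candidate R VH EH \<longleftrightarrow> subgraph_of R VH EH \<and> connected_graph VH EH \<and>
      (\<forall>x. \<not> cut_vertex VH EH x)"

definition is_block :: "'v edge multiset \<Rightarrow> 'v set \<times> 'v edge multiset \<Rightarrow> bool" where
  "is_block R H \<longleftrightarrow> block_candidate R (fst H) (snd H) \<and>
     (\<forall>VH' EH'. block_candidate R VH' EH' \<and> fst H \<subseteq> VH' \<and> snd H \<subseteq># EH' \<longrightarrow>
        VH' = fst H \<and> EH' = snd H)"

definition incident :: "'v edge multiset \<Rightarrow> 'v \<Rightarrow> 'v edge multiset" where
  "incident R v = filter_mset (\<lambda>e. v \<in> set_uprod e) R"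

definition odd_nbrs :: "'v edge multiset \<Rightarrow> 'v \<Rightarrow> 'v set" where
  "odd_nbrs R v = {u. u \<noteq> v \<and> odd (size (filter_mset (\<lambda>e. u \<in> set_uprod e) (incident R v)))}"

definition perfect_matching :: "'v edge set \<Rightarrow> 'v set \<Rightarrow> 'v edge multiset \<Rightarrow> bool" where
  "perfect_matching E Ov M \<longleftrightarrow> set_mset M \<subseteq> E \<and>
     (\<forall>e\<in>#M. set_uprod e \<subseteq> Ov \<and> proper_uprod e) \<and>
     (\<forall>u\<in>Ov. size (filter_mset (\<lambda>e. u \<in> set_uprod e) M) = 1)"

definition extract_a :: "'v edge set \<Rightarrow> 'v edge multiset \<Rightarrow> 'v \<Rightarrow> 'v edge multiset \<Rightarrow> bool" where
  "extract_a E R v R' \<longleftrightarrow> (\<exists>M. perfect_matching E (odd_nbrs R v) M \<and> R' = (R - incident R v) + M)"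

definition extraction_result :: "'v edge set \<Rightarrow> 'v edge multiset \<Rightarrow> 'v \<Rightarrow> 'v edge multiset \<Rightarrow> bool" where
  "extraction_result E R v R' \<longleftrightarrow>
     (\<not> cut_vertex (verts R) R v \<and> extract_a E R v R') \<or>
     (cut_vertex (verts R) R v \<and> card {H. is_block R H \<and> v \<in> fst H} = 2 \<and>
      (\<exists>A B a b. is_block R A \<and> is_block R B \<and> A \<noteq> B \<and> v \<in> fst A \<and> v \<in> fst B \<and>
         a \<noteq> v \<and> Upair a v \<in># snd A \<and> b \<noteq> v \<and> Upair b v \<in># snd B \<and>
         (let R'' = (R - {#Upair a v, Upair b v#}) + {#Upair a b#} in
            (v \<notin> verts R'' \<and> R' = R'') \<or> (v \<in> verts R'' \<and> extract_a E R'' v R'))))"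

definition extraction_applicable :: "'v edge multiset \<Rightarrow> 'v \<Rightarrow> bool" where
  "extraction_applicable R v \<longleftrightarrow> v \<in> verts R \<and> balanced R v \<and>
     card {u\<in>verts R. reach R v u} \<ge> 3 \<and>
     (\<not> cut_vertex (verts R) R v \<or> card {H. is_block R H \<and> v \<in> fst H} = 2)"

end

theory Submission
  imports Defs
begin

text \<open>
  Both extraction steps only change edges at \<open>v\<close>. Step (b) replaces the path \<open>a v b\<close> by the
  edge \<open>a b\<close>, and step (a) replaces the star \<open>R\<^sub>v\<close> by a perfect matching on the odd
  neighbours of \<open>v\<close>; by the triangle inequality through \<open>v\<close> neither step increases weight
  or cardinality, and degrees away from \<open>v\<close> keep their parity. Connectivity survives
  because all neighbours of \<open>v\<close> stay connected to a common hub after \<open>v\<close> is deleted: if \<open>v\<close>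
  is no cut vertex they lie in one component of \<open>G\<langle>R\<rangle> - v\<close>, and if \<open>v\<close> lies in exactly
  two blocks \<open>A\<close> and \<open>B\<close>, each of them is linked to \<open>a\<close> inside \<open>A\<close> or to \<open>b\<close> inside \<open>B\<close>,
  which the new edge joins. Collapsing \<open>v\<close> onto the hub maps walks of \<open>R + S\<close> to walks of
  \<open>R' + S\<close> for every \<open>S\<close> avoiding \<open>v\<close>, which yields the claims on reachability and on
  Eulerian extensions.
\<close>

subsection \<open>Edge multisets\<close>

lemma Upair_sym: "Upair a b = Upair b a"
  by auto

lemma Upair_eq_if_mem: "v \<in> set_uprod e \<Longrightarrow> p \<in> set_uprod e \<Longrightarrow> p \<noteq> v \<Longrightarrow> e = Upair p v"
  by (cases e) auto

lemma verts_plus [simp]: "verts (A + B) = verts A \<union> verts B"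
  by (auto simp: verts_def)

lemma finite_verts: "finite (verts X)"
  by (auto simp: verts_def)

lemma in_vertsI: "e \<in># X \<Longrightarrow> x \<in> set_uprod e \<Longrightarrow> x \<in> verts X"
  by (auto simp: verts_def)

lemma deg_plus [simp]: "deg (A + B) u = deg A u + deg B u"
  by (simp add: deg_def)

lemma deg_eq_0_if_notin_verts: "u \<notin> verts X \<Longrightarrow> deg X u = 0"
  unfolding deg_def verts_def by (induction X) auto

lemma deg_eq_size_if_loop_free:
  "(\<forall>e\<in>#X. e \<noteq> Upair u u) \<Longrightarrow> deg X u = size (filter_mset (\<lambda>e. u \<in> set_uprod e) X)"
  unfolding deg_def by (induction X) auto

lemma mem_remove_vertex_iff: "e \<in># remove_vertex v X \<longleftrightarrow> e \<in># X \<and> v \<notin> set_uprod e"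
  by (simp add: remove_vertex_def)

lemma remove_vertex_plus_incident: "remove_vertex v X + incident X v = X"
  by (rule multiset_eqI) (simp add: incident_def remove_vertex_def)

lemma sum_mset_remove_vertex_incident:
  "(\<Sum>e\<in>#X. f e) = (\<Sum>e\<in>#remove_vertex v X. f e) + (\<Sum>e\<in>#incident X v. f e)"
proof -
  have "(\<Sum>e\<in>#remove_vertex v X + incident X v. f e)
      = (\<Sum>e\<in>#remove_vertex v X. f e) + (\<Sum>e\<in>#incident X v. f e)"
    by simp
  then show ?thesis by (simp only: remove_vertex_plus_incident)
qed

lemma reach_refl [simp]: "reach X a a"
  by (simp add: reach_def)

lemma reach_edge: "Upair a b \<in># X \<Longrightarrow> reach X a b"
  unfolding reach_def by auto

lemma reach_sym: "reach X a b \<Longrightarrow> reach X b a"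
proof -
  have "sym {(a, b). Upair a b \<in># X}"
    by (auto simp: sym_def Upair_sym)
  then have "sym ({(a, b). Upair a b \<in># X}\<^sup>*)"
    by (rule sym_rtrancl)
  then show "reach X a b \<Longrightarrow> reach X b a"
    unfolding reach_def by (rule symD)
qed

lemma reach_trans: "reach X a b \<Longrightarrow> reach X b c \<Longrightarrow> reach X a c"
  unfolding reach_def by (meson rtrancl_trans)

lemma reach_via_edges:
  assumes "\<And>p q. Upair p q \<in># X \<Longrightarrow> reach Y p q" and "reach X a b"
  shows "reach Y a b"
proof -
  have "{(a, b). Upair a b \<in># X} \<subseteq> {(a, b). Upair a b \<in># Y}\<^sup>*"
    using assms(1) unfolding reach_def by auto
  then show ?thesis
    using assms(2) unfolding reach_def using rtrancl_subset_rtrancl by blast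
qed

lemma reach_mono: "reach X a b \<Longrightarrow> set_mset X \<subseteq> set_mset Y \<Longrightarrow> reach Y a b"
  by (rule reach_via_edges[of X]) (auto intro: reach_edge)

lemma reach_in_verts: "reach X a b \<Longrightarrow> a \<noteq> b \<Longrightarrow> a \<in> verts X \<and> b \<in> verts X"
  unfolding reach_def
proof (induction rule: rtrancl_induct)
  case (step y z)
  then show ?case by (cases "a = y") (auto intro: in_vertsI)
qed simp

text \<open>A walk from \<open>v\<close> leaves \<open>v\<close> for the last time along an edge \<open>{p, v}\<close>.\<close>

lemma reach_from_neighbour:
  assumes "reach X v w" "w \<noteq> v"
  shows "\<exists>p. p \<noteq> v \<and> Upair p v \<in># X \<and> reach (remove_vertex v X) p w"
proof -
  have "(v, w) \<in> {(a, b). Upair a b \<in># X}\<^sup>*"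
    using assms(1) by (simp add: reach_def)
  then have "w = v \<or> (\<exists>p. p \<noteq> v \<and> Upair p v \<in># X \<and> reach (remove_vertex v X) p w)"
  proof (induction rule: rtrancl_induct)
    case (step y z)
    then have e: "Upair y z \<in># X" by simp
    consider "z = v" | "z \<noteq> v" "y = v" | "z \<noteq> v" "y \<noteq> v" by blast
    then show ?case
    proof cases
      case 2
      then have "Upair z v \<in># X"
        using e Upair_sym[of v z] by simp
      with 2 show ?thesis
        by (intro disjI2 exI[of _ z]) simp
    next
      case 3
      then obtain p where p: "p \<noteq> v" "Upair p v \<in># X" "reach (remove_vertex v X) p y"
        using step.IH by blast
      have "reach (remove_vertex v X) y z"
        using e 3 by (intro reach_edge) (simp add: mem_remove_vertex_iff)
      then show ?thesis using p reach_trans[OF p(3)] by blast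
    qed simp
  qed simp
  then show ?thesis using assms(2) by blast
qed

lemma card_ge_3_obtain_two_others:
  assumes "3 \<le> card C"
  obtains w1 w2 where "w1 \<in> C" "w2 \<in> C" "w1 \<noteq> w2" "w1 \<noteq> v" "w2 \<noteq> v"
proof -
  have "2 \<le> card (C - {v})"
    using assms card_Diff_singleton_if[of C v] by (cases "finite C") auto
  then obtain D where "D \<subseteq> C - {v}" "card D = 2"
    using obtain_subset_with_card_n by metis
  then show ?thesis
    using that by (auto simp: card_2_iff)
qed

subsection \<open>Removing a vertex faithfully\<close>

lemma reach_plus_if_edges_reach:
  assumes "\<And>p q. Upair p q \<in># Y \<Longrightarrow> reach X p q" and "reach (Y + S) u w"
  shows "reach (X + S) u w"
proof (rule reach_via_edges[OF _ assms(2)])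
  fix p q assume "Upair p q \<in># Y + S"
  then consider "Upair p q \<in># Y" | "Upair p q \<in># S" by auto
  then show "reach (X + S) p q"
  proof cases
    case 1
    then have "reach X p q" by (rule assms(1))
    then show ?thesis by (rule reach_mono) auto
  qed (auto intro: reach_edge)
qed

text \<open>Collapsing \<open>v\<close> onto the hub \<open>c\<close> maps every walk of \<open>X + S\<close> to one of \<open>Y + S\<close>.\<close>

lemma reach_plus_if_neighbours_linked:
  assumes vS: "v \<notin> verts S"
    and kept: "\<And>e. e \<in># X \<Longrightarrow> v \<notin> set_uprod e \<Longrightarrow> e \<in># Y"
    and linked: "\<And>p. p \<noteq> v \<Longrightarrow> Upair p v \<in># X \<Longrightarrow> reach Y p c"
    and "reach (X + S) u w" "u \<noteq> v" "w \<noteq> v"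
  shows "reach (Y + S) u w"
proof -
  define f where "f x = (if x = v then c else x)" for x
  have notS: "Upair p q \<notin># S" if "v \<in> {p, q}" for p q
    using vS that unfolding verts_def by auto
  have linked': "reach (Y + S) p c" if "p \<noteq> v" "Upair p v \<in># X" for p
    using linked[OF that] by (rule reach_mono) auto
  have "(u, w) \<in> {(a, b). Upair a b \<in># X + S}\<^sup>*"
    using assms(4) by (simp add: reach_def)
  then have "reach (Y + S) (f u) (f w)"
  proof (induction rule: rtrancl_induct)
    case (step y z)
    then have e: "Upair y z \<in># X + S" by simp
    have "reach (Y + S) (f y) (f z)"
    proof (cases "y = v"; cases "z = v")
      assume "y = v" "z \<noteq> v"
      then have "Upair z v \<in># X" using e notS Upair_sym[of v z] by auto
      then show ?thesis using linked' \<open>y = v\<close> \<open>z \<noteq> v\<close> by (simp add: f_def reach_sym)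
    next
      assume "y \<noteq> v" "z = v"
      then have "Upair y v \<in># X" using e notS by auto
      then show ?thesis using linked' \<open>y \<noteq> v\<close> \<open>z = v\<close> by (simp add: f_def)
    next
      assume "y \<noteq> v" "z \<noteq> v"
      then have "Upair y z \<in># Y + S" using e kept by auto
      then show ?thesis using \<open>y \<noteq> v\<close> \<open>z \<noteq> v\<close> by (simp add: f_def reach_edge)
    qed (simp add: f_def)
    with step.IH show ?case by (rule reach_trans)
  qed simp
  then show ?thesis using assms(5,6) by (simp add: f_def)
qed

text \<open>Properties (i)--(iv) of an extraction of \<open>v\<close>, with connectivity compared after adding
  any \<open>S\<close> that avoids \<open>v\<close>; in this form they compose, so that step (b) may be followed by (a).\<close>

definition faithful_removal :: "('v edge \<Rightarrow> nat) \<Rightarrow> 'v edge multiset \<Rightarrow> 'v edge multiset \<Rightarrow> 'v \<Rightarrow> bool" where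
  "faithful_removal \<omega> X Y v \<longleftrightarrow>
     verts Y - {v} = verts X - {v} \<and> (\<Sum>e\<in>#Y. \<omega> e) \<le> (\<Sum>e\<in>#X. \<omega> e) \<and> size Y \<le> size X \<and>
     (\<forall>u. u \<noteq> v \<longrightarrow> even (deg Y u) = even (deg X u)) \<and>
     (\<forall>S u w. v \<notin> verts S \<longrightarrow> u \<noteq> v \<longrightarrow> w \<noteq> v \<longrightarrow> reach (Y + S) u w = reach (X + S) u w)"

lemma faithful_removal_trans:
  "faithful_removal \<omega> X Y v \<Longrightarrow> faithful_removal \<omega> Y Z v \<Longrightarrow> faithful_removal \<omega> X Z v"
  unfolding faithful_removal_def by (metis le_trans)

lemma faithful_removalI:
  assumes "verts Y - {v} = verts X - {v}" "(\<Sum>e\<in>#Y. \<omega> e) \<le> (\<Sum>e\<in>#X. \<omega> e)" "size Y \<le> size X"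
    and "\<And>u. u \<noteq> v \<Longrightarrow> even (deg Y u) \<longleftrightarrow> even (deg X u)"
    and "\<And>e. e \<in># X \<Longrightarrow> v \<notin> set_uprod e \<Longrightarrow> e \<in># Y"
    and "\<And>p q. Upair p q \<in># Y \<Longrightarrow> reach X p q"
    and "\<And>p. p \<noteq> v \<Longrightarrow> Upair p v \<in># X \<Longrightarrow> reach (remove_vertex v Y) p c"
  shows "faithful_removal \<omega> X Y v"
proof -
  have "reach Y p c" if "p \<noteq> v" "Upair p v \<in># X" for p
    using assms(7)[OF that] by (rule reach_mono) (auto simp: mem_remove_vertex_iff)
  then have "reach (Y + S) u w \<longleftrightarrow> reach (X + S) u w"
    if "v \<notin> verts S" "u \<noteq> v" "w \<noteq> v" for S u w
    using that reach_plus_if_edges_reach[OF assms(6)] reach_plus_if_neighbours_linked[OF _ assms(5)]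
    by blast
  then show ?thesis
    using assms(1-4) by (simp add: faithful_removal_def)
qed

lemma verts_remove_vertex_eq:
  assumes "c \<in> verts (remove_vertex v X)"
    and "\<And>p. p \<noteq> v \<Longrightarrow> Upair p v \<in># X \<Longrightarrow> reach (remove_vertex v X) p c"
  shows "verts (remove_vertex v X) = verts X - {v}"
proof
  show "verts (remove_vertex v X) \<subseteq> verts X - {v}"
    by (auto simp: verts_def mem_remove_vertex_iff)
  show "verts X - {v} \<subseteq> verts (remove_vertex v X)"
  proof
    fix x assume x: "x \<in> verts X - {v}"
    then obtain e where e: "e \<in># X" "x \<in> set_uprod e" by (auto simp: verts_def)
    show "x \<in> verts (remove_vertex v X)"
    proof (cases "v \<in> set_uprod e")
      case True
      then have "Upair x v \<in># X"
        using Upair_eq_if_mem[OF True e(2)] x e(1) by simp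
      then have "reach (remove_vertex v X) x c"
        using assms(2) x by simp
      then show ?thesis
        using assms(1) reach_in_verts[of "remove_vertex v X" x c] by (cases "x = c") auto
    next
      case False
      then show ?thesis using e by (auto intro: in_vertsI simp: mem_remove_vertex_iff)
    qed
  qed
qed

subsection \<open>Step (a): a perfect matching on the odd neighbours\<close>

lemma sum_le_sum_mset:
  fixes f :: "'a \<Rightarrow> nat"
  assumes "B \<subseteq> set_mset X"
  shows "(\<Sum>x\<in>B. f x) \<le> (\<Sum>x\<in>#X. f x)"
proof -
  have "mset_set B \<subseteq># mset_set (set_mset X)"
    using assms by (intro subset_imp_msubset_mset_set) auto
  also have "\<dots> \<subseteq># X"
    by (rule mset_set_set_mset_msubset)
  finally obtain C where "X = mset_set B + C"
    by (auto simp: subset_mset.le_iff_add)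
  then show ?thesis
    by (simp add: sum_unfold_sum_mset)
qed

lemma sum_mset_sum_set_uprod:
  fixes f :: "'v \<Rightarrow> nat"
  assumes "finite A" "\<forall>e\<in>#M. set_uprod e \<subseteq> A"
  shows "(\<Sum>e\<in>#M. \<Sum>u\<in>set_uprod e. f u) = (\<Sum>u\<in>A. size (filter_mset (\<lambda>e. u \<in> set_uprod e) M) * f u)"
  using assms(2)
proof (induction M)
  case (add e M)
  have "(\<Sum>u\<in>set_uprod e. f u) = sum f (A \<inter> set_uprod e)"
    using add.prems by (simp add: Int_absorb1)
  also have "\<dots> = (\<Sum>u\<in>A. (if u \<in> set_uprod e then 1 else 0) * f u)"
    using assms(1) by (auto simp: sum.inter_restrict intro!: sum.cong)
  finally have "(\<Sum>u\<in>set_uprod e. f u) = (\<Sum>u\<in>A. (if u \<in> set_uprod e then 1 else 0) * f u)" .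
  then show ?case
    using add by (auto simp: sum.distrib[symmetric] algebra_simps intro!: sum.cong)
qed simp

lemma perfect_matching_sum:
  fixes f :: "'v \<Rightarrow> nat"
  assumes "perfect_matching E A M" "finite A"
  shows "(\<Sum>e\<in>#M. \<Sum>u\<in>set_uprod e. f u) = (\<Sum>u\<in>A. f u)"
  using assms sum_mset_sum_set_uprod[OF assms(2), of M f] by (simp add: perfect_matching_def)

lemma perfect_matching_size:
  assumes "perfect_matching E A M" "finite A"
  shows "2 * size M = card A"
proof -
  have "card (set_uprod e) = 2" if "e \<in># M" for e
    using that assms(1) by (cases e) (auto simp: perfect_matching_def)
  then have "(\<Sum>e\<in>#M. \<Sum>u\<in>set_uprod e. 1::nat) = (\<Sum>e\<in>#M. 2)"
    by (intro arg_cong[where f = sum_mset] image_mset_cong) simp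
  then show ?thesis
    using perfect_matching_sum[OF assms, of "\<lambda>_. 1"] by (simp add: mult.commute)
qed

lemma perfect_matching_weight_le:
  fixes \<omega> :: "'v edge \<Rightarrow> nat"
  assumes "perfect_matching E A M" "finite A"
    and "\<And>x y. Upair x y \<in># M \<Longrightarrow> \<omega> (Upair x y) \<le> g x + g y"
  shows "(\<Sum>e\<in>#M. \<omega> e) \<le> (\<Sum>u\<in>A. g u)"
proof -
  have "\<omega> e \<le> (\<Sum>u\<in>set_uprod e. g u)" if "e \<in># M" for e
  proof (cases e)
    case (Upair x y)
    then have "x \<noteq> y" using that assms(1) by (auto simp: perfect_matching_def)
    then show ?thesis using assms(3) that Upair by simp
  qed
  then have "(\<Sum>e\<in>#M. \<omega> e) \<le> (\<Sum>e\<in>#M. \<Sum>u\<in>set_uprod e. g u)"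
    by (rule sum_mset_mono)
  then show ?thesis using perfect_matching_sum[OF assms(1,2)] by simp
qed

lemma sum_neighbours_le_sum_mset:
  fixes f :: "'v edge \<Rightarrow> nat"
  assumes "\<And>u. u \<in> A \<Longrightarrow> u \<noteq> v \<and> Upair u v \<in># X"
  shows "(\<Sum>u\<in>A. f (Upair u v)) \<le> (\<Sum>e\<in>#X. f e)"
proof -
  have "inj_on (\<lambda>u. Upair u v) A"
    using assms by (auto simp: inj_on_def)
  then have "(\<Sum>u\<in>A. f (Upair u v)) = (\<Sum>e\<in>(\<lambda>u. Upair u v) ` A. f e)"
    by (simp add: sum.reindex)
  also have "\<dots> \<le> (\<Sum>e\<in>#X. f e)"
    using assms by (intro sum_le_sum_mset) auto
  finally show ?thesis .
qed

lemma odd_nbrsD: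
  assumes "u \<in> odd_nbrs X v"
  shows "u \<noteq> v" "Upair u v \<in># X"
proof -
  show "u \<noteq> v" using assms by (simp add: odd_nbrs_def)
  from assms have "odd (size (filter_mset (\<lambda>e. u \<in> set_uprod e) (incident X v)))"
    by (simp add: odd_nbrs_def)
  then have "filter_mset (\<lambda>e. u \<in> set_uprod e) (incident X v) \<noteq> {#}"
    by (metis even_zero size_empty)
  then obtain e where "e \<in># X" "v \<in> set_uprod e" "u \<in> set_uprod e"
    by (auto simp: incident_def)
  with \<open>u \<noteq> v\<close> show "Upair u v \<in># X" using Upair_eq_if_mem[of v e u] by simp
qed

lemma odd_nbrs_incident: "u \<in> odd_nbrs X v \<Longrightarrow> u \<noteq> v \<and> Upair u v \<in># incident X v"
  using odd_nbrsD[of u X v] by (simp add: incident_def)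

lemma finite_odd_nbrs: "finite (odd_nbrs X v)"
proof (rule finite_subset[OF _ finite_verts])
  show "odd_nbrs X v \<subseteq> verts X"
    using odd_nbrsD by (fastforce intro: in_vertsI)
qed

lemma perfect_matching_odd_nbrs_parity:
  assumes "perfect_matching E (odd_nbrs X v) M" "u \<noteq> v"
  shows "even (deg (remove_vertex v X + M) u) \<longleftrightarrow> even (deg X u)"
proof -
  let ?N = "incident X v"
  have deg_N: "deg ?N u = size (filter_mset (\<lambda>e. u \<in> set_uprod e) ?N)"
    using assms(2) by (intro deg_eq_size_if_loop_free) (auto simp: incident_def)
  have deg_M: "deg M u = size (filter_mset (\<lambda>e. u \<in> set_uprod e) M)"
    using assms(1) by (intro deg_eq_size_if_loop_free) (fastforce simp: perfect_matching_def)
  have "deg X u = deg (remove_vertex v X) u + deg ?N u"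
    by (metis deg_plus remove_vertex_plus_incident)
  moreover have "deg M u = (if u \<in> odd_nbrs X v then 1 else 0)"
    using assms(1) unfolding deg_M perfect_matching_def by auto
  moreover have "odd (deg ?N u) \<longleftrightarrow> u \<in> odd_nbrs X v"
    using assms(2) by (simp add: deg_N odd_nbrs_def)
  ultimately show ?thesis by auto
qed

lemma perfect_matching_odd_nbrs_weight_le:
  fixes \<omega> :: "'v edge \<Rightarrow> nat"
  assumes M: "perfect_matching E (odd_nbrs X v) M"
    and triangle: "\<And>x y. x \<noteq> y \<Longrightarrow> Upair x v \<in># X \<Longrightarrow> Upair y v \<in># X \<Longrightarrow>
      \<omega> (Upair x y) \<le> \<omega> (Upair x v) + \<omega> (Upair y v)"
  shows "(\<Sum>e\<in>#M. \<omega> e) \<le> (\<Sum>e\<in>#incident X v. \<omega> e)"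
proof -
  have "(\<Sum>e\<in>#M. \<omega> e) \<le> (\<Sum>u\<in>odd_nbrs X v. \<omega> (Upair u v))"
  proof (rule perfect_matching_weight_le[OF M finite_odd_nbrs])
    fix x y assume "Upair x y \<in># M"
    then have "x \<noteq> y" "x \<in> odd_nbrs X v" "y \<in> odd_nbrs X v"
      using M by (auto simp: perfect_matching_def)
    then show "\<omega> (Upair x y) \<le> \<omega> (Upair x v) + \<omega> (Upair y v)"
      by (simp add: triangle odd_nbrsD(2))
  qed
  also have "\<dots> \<le> (\<Sum>e\<in>#incident X v. \<omega> e)"
    using odd_nbrs_incident by (rule sum_neighbours_le_sum_mset)
  finally show ?thesis .
qed

lemma perfect_matching_odd_nbrs_size_le:
  assumes "perfect_matching E (odd_nbrs X v) M"
  shows "size M \<le> size (incident X v)"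
proof -
  have "2 * size M = card (odd_nbrs X v)"
    using assms finite_odd_nbrs by (rule perfect_matching_size)
  also have "\<dots> \<le> size (incident X v)"
    using sum_neighbours_le_sum_mset[OF odd_nbrs_incident, where f = "\<lambda>_. 1"] by simp
  finally show ?thesis by simp
qed

lemma extract_a_faithful:
  fixes \<omega> :: "'v edge \<Rightarrow> nat"
  assumes "extract_a E X v Y"
    and hub: "c \<in> verts (remove_vertex v X)"
    and linked: "\<And>p. p \<noteq> v \<Longrightarrow> Upair p v \<in># X \<Longrightarrow> reach (remove_vertex v X) p c"
    and triangle: "\<And>x y. x \<noteq> y \<Longrightarrow> Upair x v \<in># X \<Longrightarrow> Upair y v \<in># X \<Longrightarrow>
      \<omega> (Upair x y) \<le> \<omega> (Upair x v) + \<omega> (Upair y v)"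
  shows "faithful_removal \<omega> X Y v \<and> v \<notin> verts Y"
proof -
  let ?O = "odd_nbrs X v" and ?X0 = "remove_vertex v X"
  obtain M where M: "perfect_matching E ?O M" and Y: "Y = ?X0 + M"
    using assms(1) remove_vertex_plus_incident[of v X]
    by (auto simp: extract_a_def) (metis add_diff_cancel_right')
  have M_edges: "set_uprod e \<subseteq> ?O" if "e \<in># M" for e
    using M that by (simp add: perfect_matching_def)
  have "?O \<subseteq> verts X - {v}"
    using odd_nbrsD by (fastforce intro: in_vertsI)
  then have verts_Y: "verts Y = verts X - {v}"
    using M_edges verts_remove_vertex_eq[OF hub linked] by (auto simp: Y verts_def)
  have edges_reach: "reach X p q" if "Upair p q \<in># Y" for p q
  proof (cases "Upair p q \<in># M")
    case True
    then have pv: "Upair p v \<in># X" and qv: "Upair q v \<in># X"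
      using M_edges[OF True] odd_nbrsD(2) by auto
    show ?thesis
      using reach_trans[OF reach_edge[OF pv] reach_sym[OF reach_edge[OF qv]]] .
  next
    case False
    then show ?thesis using that by (auto simp: Y mem_remove_vertex_iff intro: reach_edge)
  qed
  have "faithful_removal \<omega> X Y v"
  proof (rule faithful_removalI[where c = c])
    show "(\<Sum>e\<in>#Y. \<omega> e) \<le> (\<Sum>e\<in>#X. \<omega> e)"
      using perfect_matching_odd_nbrs_weight_le[where \<omega> = \<omega>, OF M triangle]
      by (simp add: Y sum_mset_remove_vertex_incident[of _ X v])
    show "size Y \<le> size X"
      using perfect_matching_odd_nbrs_size_le[OF M] size_union[of ?X0 "incident X v"]
      by (simp add: Y remove_vertex_plus_incident)
    show "reach (remove_vertex v Y) p c" if "p \<noteq> v" "Upair p v \<in># X" for p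
      using linked[OF that] by (rule reach_mono) (auto simp: Y mem_remove_vertex_iff)
  qed (use verts_Y perfect_matching_odd_nbrs_parity[OF M] edges_reach in
       \<open>auto simp: Y mem_remove_vertex_iff\<close>)
  then show ?thesis using verts_Y by blast
qed

lemma metric_instance_triangle:
  assumes "metric_instance V E \<omega> R" "x \<noteq> y" "Upair x v \<in># R" "Upair y v \<in># R"
  shows "\<omega> (Upair x y) \<le> \<omega> (Upair x v) + \<omega> (Upair y v)"
proof -
  have E: "Upair x v \<in> E" "Upair v y \<in> E"
    using assms by (auto simp: metric_instance_def rpp_instance_def Upair_sym)
  then have V: "x \<in> V" "v \<in> V" "y \<in> V"
    using assms(1) by (auto simp: metric_instance_def rpp_instance_def)
  moreover have "Upair x y \<in> E"
    using assms(1,2) V by (simp add: metric_instance_def)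
  ultimately have "\<omega> (Upair x y) \<le> \<omega> (Upair x v) + \<omega> (Upair v y)"
    using assms(1) E unfolding metric_instance_def by blast
  then show ?thesis
    by (simp only: Upair_sym[of v y])
qed

subsection \<open>Components and cut vertices\<close>

definition component_rel :: "'v set \<Rightarrow> 'v edge multiset \<Rightarrow> ('v \<times> 'v) set" where
  "component_rel VH EH = {(a, b). a \<in> VH \<and> b \<in> VH \<and> reach EH a b}"

lemma ncomp_eq_card_quotient: "ncomp VH EH = card (VH // component_rel VH EH)"
  by (simp add: ncomp_def component_rel_def)

lemma equiv_component_rel: "equiv VH (component_rel VH EH)"
proof (rule equivI)
  show "component_rel VH EH \<subseteq> VH \<times> VH" "refl_on VH (component_rel VH EH)"
    by (auto simp: component_rel_def refl_on_def)
  show "sym (component_rel VH EH)"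
    by (rule symI) (simp add: component_rel_def reach_sym)
  show "trans (component_rel VH EH)"
  proof (rule transI)
    fix a b c assume "(a, b) \<in> component_rel VH EH" "(b, c) \<in> component_rel VH EH"
    then show "(a, c) \<in> component_rel VH EH"
      using reach_trans[of EH a b c] by (simp add: component_rel_def)
  qed
qed

lemma finite_quotient_component_rel: "finite VH \<Longrightarrow> finite (VH // component_rel VH EH)"
  by (rule finite_quotient) (auto simp: component_rel_def)

lemma reach_if_ncomp_le_1:
  assumes "finite VH" "ncomp VH EH \<le> 1" "p \<in> VH" "q \<in> VH"
  shows "reach EH p q"
proof -
  let ?r = "component_rel VH EH"
  have "card (VH // ?r) \<le> Suc 0"
    using assms(2) by (simp add: ncomp_eq_card_quotient)
  moreover have "?r `` {p} \<in> VH // ?r" "?r `` {q} \<in> VH // ?r"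
    using assms(3,4) by (auto intro: quotientI)
  ultimately have "?r `` {p} = ?r `` {q}"
    using card_le_Suc0_iff_eq[OF finite_quotient_component_rel[OF assms(1)]] by simp
  then have "(p, q) \<in> ?r"
    using assms(3,4) by (simp add: equiv_class_eq_iff[OF equiv_component_rel])
  then show ?thesis by (simp add: component_rel_def)
qed

lemma quotient_component_rel_subset:
  assumes "\<forall>p\<in>VH. \<forall>q\<in>VH. reach EH p q"
  shows "VH // component_rel VH EH \<subseteq> {VH}"
  using assms by (auto simp: component_rel_def elim!: quotientE)

lemma ncomp_le_1_if_connected:
  assumes "\<forall>p\<in>VH. \<forall>q\<in>VH. reach EH p q"
  shows "ncomp VH EH \<le> 1"
proof -
  have "card (VH // component_rel VH EH) \<le> card {VH}"
    using quotient_component_rel_subset[OF assms] by (intro card_mono) auto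
  then show ?thesis by (simp add: ncomp_eq_card_quotient)
qed

lemma ncomp_eq_1_if_connected:
  assumes "connected_graph VH EH"
  shows "ncomp VH EH = 1"
proof -
  obtain x where x: "x \<in> VH" using assms by (auto simp: connected_graph_def)
  have conn: "\<forall>p\<in>VH. \<forall>q\<in>VH. reach EH p q"
    using assms by (simp add: connected_graph_def)
  have "component_rel VH EH `` {x} = VH"
    using x conn by (auto simp: component_rel_def)
  then have "VH \<in> VH // component_rel VH EH"
    using quotientI[OF x] by metis
  then have "VH // component_rel VH EH = {VH}"
    using quotient_component_rel_subset[OF conn] by blast
  then show ?thesis by (simp add: ncomp_eq_card_quotient)
qed

lemma component_rel_remove_vertex_class:
  assumes "x \<in> verts R - {v}"
  shows "component_rel (verts R) R `` (component_rel (verts R - {v}) (remove_vertex v R) `` {x})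
    = component_rel (verts R) R `` {x}"
    (is "?r `` (?r' `` {x}) = _")
proof
  show "?r `` (?r' `` {x}) \<subseteq> ?r `` {x}"
  proof
    fix z assume "z \<in> ?r `` (?r' `` {x})"
    then obtain y where "(x, y) \<in> ?r'" "(y, z) \<in> ?r" by blast
    moreover have "set_mset (remove_vertex v R) \<subseteq> set_mset R"
      by (auto simp: mem_remove_vertex_iff)
    ultimately have "reach R x y" "reach R y z" "x \<in> verts R" "z \<in> verts R"
      using reach_mono[of "remove_vertex v R" x y R] by (auto simp: component_rel_def)
    then show "z \<in> ?r `` {x}"
      using reach_trans[of R x y z] by (simp add: component_rel_def)
  qed
  have "(x, x) \<in> ?r'"
    using assms by (simp add: component_rel_def)
  then show "?r `` {x} \<subseteq> ?r `` (?r' `` {x})"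
    by blast
qed

text \<open>The component of \<open>v\<close> is the image of the component of its neighbour \<open>p\<close>.\<close>

lemma image_quotient_remove_vertex:
  assumes "p \<noteq> v" "Upair p v \<in># R"
  shows "(\<lambda>c. component_rel (verts R) R `` c) `
      ((verts R - {v}) // component_rel (verts R - {v}) (remove_vertex v R))
    = verts R // component_rel (verts R) R"
    (is "?F ` (?V' // ?r') = ?V // ?r")
proof
  show "?F ` (?V' // ?r') \<subseteq> ?V // ?r"
  proof
    fix c assume "c \<in> ?F ` (?V' // ?r')"
    then obtain x where "x \<in> ?V'" "c = ?F (?r' `` {x})"
      by (auto elim!: quotientE)
    then show "c \<in> ?V // ?r"
      by (simp add: component_rel_remove_vertex_class quotientI)
  qed
  show "?V // ?r \<subseteq> ?F ` (?V' // ?r')"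
  proof
    fix c assume "c \<in> ?V // ?r"
    then obtain x where c: "c = ?r `` {x}" "x \<in> ?V" by (auto elim: quotientE)
    have p: "p \<in> ?V'" and v: "v \<in> ?V"
      using assms in_vertsI[OF assms(2)] by auto
    have "(p, v) \<in> ?r"
      using p v reach_edge[OF assms(2)] by (simp add: component_rel_def)
    then have "?r `` {v} = ?r `` {p}"
      using equiv_class_eq_iff[OF equiv_component_rel] by (metis equiv_class_eq)
    then obtain y where y: "y \<in> ?V'" "c = ?r `` {y}"
      using c p by (cases "x = v") auto
    then have "c = ?F (?r' `` {y})"
      by (simp add: component_rel_remove_vertex_class)
    moreover have "?r' `` {y} \<in> ?V' // ?r'"
      using y(1) by (rule quotientI)
    ultimately show "c \<in> ?F ` (?V' // ?r')"
      by blast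
  qed
qed

text \<open>If two neighbours of \<open>v\<close> are separated in \<open>G\<langle>R\<rangle> - v\<close>, the surjection above identifies
  their distinct components, so \<open>G\<langle>R\<rangle> - v\<close> has strictly more components.\<close>

lemma cut_vertex_if_neighbours_separated:
  assumes "p \<noteq> v" "q \<noteq> v" "Upair p v \<in># R" "Upair q v \<in># R"
    and "\<not> reach (remove_vertex v R) p q"
  shows "cut_vertex (verts R) R v"
proof -
  let ?V = "verts R" and ?V' = "verts R - {v}" and ?R' = "remove_vertex v R"
  let ?r = "component_rel ?V R" and ?r' = "component_rel ?V' ?R'"
  let ?F = "\<lambda>c. ?r `` c"
  have p: "p \<in> ?V'" and q: "q \<in> ?V'"
    using assms in_vertsI[OF assms(3)] in_vertsI[OF assms(4)] by auto
  have "reach R p q"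
    using reach_trans[OF reach_edge[OF assms(3)] reach_sym[OF reach_edge[OF assms(4)]]] .
  then have "?r `` {p} = ?r `` {q}"
    using p q by (intro equiv_class_eq[OF equiv_component_rel]) (simp add: component_rel_def)
  then have "?F (?r' `` {p}) = ?F (?r' `` {q})"
    using p q by (simp add: component_rel_remove_vertex_class)
  moreover have "?r' `` {p} \<noteq> ?r' `` {q}"
  proof
    assume "?r' `` {p} = ?r' `` {q}"
    then have "(p, q) \<in> ?r'"
      using eq_equiv_class_iff[OF equiv_component_rel p q] by simp
    then show False
      using assms(5) by (simp add: component_rel_def)
  qed
  moreover have "?r' `` {p} \<in> ?V' // ?r'" "?r' `` {q} \<in> ?V' // ?r'"
    using p q by (auto intro: quotientI)
  ultimately have "\<not> inj_on ?F (?V' // ?r')"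
    using inj_onD by metis
  moreover have fin: "finite (?V' // ?r')"
    using finite_verts by (intro finite_quotient_component_rel) auto
  ultimately have "card (?F ` (?V' // ?r')) < card (?V' // ?r')"
    using card_image_le[OF fin, of ?F] inj_on_iff_eq_card[OF fin, of ?F] by linarith
  then have "ncomp ?V R < ncomp ?V' ?R'"
    using image_quotient_remove_vertex[OF assms(1,3)] by (simp add: ncomp_eq_card_quotient)
  then show ?thesis
    using in_vertsI[OF assms(3)] by (simp add: cut_vertex_def)
qed

lemma not_cut_vertex_extraction_faithful:
  fixes \<omega> :: "'v edge \<Rightarrow> nat"
  assumes "\<not> cut_vertex (verts R) R v"
    and "3 \<le> card {u \<in> verts R. reach R v u}"
    and "extract_a E R v R'"
    and triangle: "\<And>x y. x \<noteq> y \<Longrightarrow> Upair x v \<in># R \<Longrightarrow> Upair y v \<in># R \<Longrightarrow>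
      \<omega> (Upair x y) \<le> \<omega> (Upair x v) + \<omega> (Upair y v)"
  shows "faithful_removal \<omega> R R' v \<and> v \<notin> verts R'"
proof -
  obtain w1 w2 where w: "w1 \<noteq> w2" "w1 \<noteq> v" "w2 \<noteq> v" "reach R v w1" "reach R v w2"
    using card_ge_3_obtain_two_others[OF assms(2)] by blast
  obtain p where p: "p \<noteq> v" "Upair p v \<in># R" "reach (remove_vertex v R) p w1"
    using reach_from_neighbour[OF w(4,2)] by blast
  have linked: "reach (remove_vertex v R) q p" if "q \<noteq> v" "Upair q v \<in># R" for q
    using cut_vertex_if_neighbours_separated[of q v p R] that p(1,2) assms(1) by blast
  obtain q where "q \<noteq> v" "Upair q v \<in># R" "reach (remove_vertex v R) q w2"
    using reach_from_neighbour[OF w(5,3)] by blast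
  then have "reach (remove_vertex v R) p w2"
    using reach_trans[OF reach_sym[OF linked]] by blast
  then have "p \<in> verts (remove_vertex v R)"
    using p(3) w(1) reach_in_verts[of "remove_vertex v R" p] by (cases "p = w1") auto
  then show ?thesis
    by (rule extract_a_faithful[where \<omega> = \<omega>, OF assms(3) _ linked triangle])
qed

subsection \<open>Blocks\<close>

lemma block_candidate_reach_remove_vertex:
  assumes "block_candidate R VH EH" "p \<in> VH - {x}" "q \<in> VH - {x}"
  shows "reach (remove_vertex x EH) p q"
proof (cases "x \<in> VH")
  case True
  have sub: "subgraph_of R VH EH" and con: "connected_graph VH EH" and "\<not> cut_vertex VH EH x"
    using assms(1) by (simp_all add: block_candidate_def)
  then have "ncomp (VH - {x}) (remove_vertex x EH) \<le> 1"
    using ncomp_eq_1_if_connected[OF con] True by (simp add: cut_vertex_def)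
  moreover have "finite (VH - {x})"
    using sub finite_verts by (auto simp: subgraph_of_def intro: finite_subset)
  ultimately show ?thesis
    using reach_if_ncomp_le_1 assms(2,3) by metis
next
  case False
  then have "x \<notin> verts EH"
    using assms(1) by (auto simp: block_candidate_def subgraph_of_def)
  then have sub: "set_mset EH \<subseteq> set_mset (remove_vertex x EH)"
    by (auto simp: mem_remove_vertex_iff intro: in_vertsI)
  have "connected_graph VH EH"
    using assms(1) by (simp add: block_candidate_def)
  then have "reach EH p q"
    using assms(2,3) unfolding connected_graph_def by blast
  then show ?thesis
    using sub by (rule reach_mono)
qed

lemma not_cut_vertex_if_reach_remove_vertex:
  assumes "connected_graph VH EH"
    and "\<forall>p\<in>VH - {x}. \<forall>q\<in>VH - {x}. reach (remove_vertex x EH) p q"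
  shows "\<not> cut_vertex VH EH x"
  using ncomp_eq_1_if_connected[OF assms(1)] ncomp_le_1_if_connected[OF assms(2)]
  by (simp add: cut_vertex_def)

lemma block_candidate_edge:
  assumes "Upair v p \<in># R" "v \<noteq> p"
  shows "block_candidate R {v, p} {#Upair v p#}"
proof -
  have "reach {#Upair v p#} v p"
    by (rule reach_edge) simp
  then have con: "connected_graph {v, p} {#Upair v p#}"
    by (auto simp: connected_graph_def intro: reach_sym)
  have "\<not> cut_vertex {v, p} {#Upair v p#} x" for x
  proof (rule not_cut_vertex_if_reach_remove_vertex[OF con], intro ballI)
    fix a b assume a: "a \<in> {v, p} - {x}" and b: "b \<in> {v, p} - {x}"
    show "reach (remove_vertex x {#Upair v p#}) a b"
    proof (cases "a = b")
      case False
      then have "remove_vertex x {#Upair v p#} = {#Upair v p#}" "Upair a b = Upair v p"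
        using a b by (auto simp: remove_vertex_def)
      then show ?thesis by (simp add: reach_edge)
    qed simp
  qed
  moreover have "subgraph_of R {v, p} {#Upair v p#}"
    using assms(1) in_vertsI[OF assms(1)] by (auto simp: subgraph_of_def verts_def)
  ultimately show ?thesis
    using con by (simp add: block_candidate_def)
qed

lemma reach_through_shared_vertex:
  assumes "\<forall>y\<in>VA. reach XA y c" "\<forall>y\<in>VB. reach XB y c"
    and "set_mset XA \<subseteq> set_mset X" "set_mset XB \<subseteq> set_mset X"
    and "p \<in> VA \<union> VB" "q \<in> VA \<union> VB"
  shows "reach X p q"
proof -
  have to_c: "reach X y c" if "y \<in> VA \<union> VB" for y
    using that assms(1,2) reach_mono[OF _ assms(3)] reach_mono[OF _ assms(4)]
    by (cases "y \<in> VA") blast+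
  show ?thesis
    using reach_trans[OF to_c[OF assms(5)] reach_sym[OF to_c[OF assms(6)]]] .
qed

lemma block_candidate_Un:
  assumes A: "block_candidate R VA EA" and B: "block_candidate R VB EB"
    and c: "c1 \<noteq> c2" "c1 \<in> VA \<inter> VB" "c2 \<in> VA \<inter> VB"
  shows "block_candidate R (VA \<union> VB) (EA \<union># EB)"
proof -
  have "\<forall>y\<in>VA. reach EA y c1" "\<forall>y\<in>VB. reach EB y c1"
    using A B c by (simp_all add: block_candidate_def connected_graph_def)
  then have "reach (EA \<union># EB) p q" if "p \<in> VA \<union> VB" "q \<in> VA \<union> VB" for p q
    by (rule reach_through_shared_vertex[OF _ _ _ _ that]) auto
  then have con: "connected_graph (VA \<union> VB) (EA \<union># EB)"
    using c by (auto simp: connected_graph_def)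
  have "\<forall>p\<in>VA \<union> VB - {x}. \<forall>q\<in>VA \<union> VB - {x}. reach (remove_vertex x (EA \<union># EB)) p q" for x
  proof (intro ballI)
    fix p q assume "p \<in> VA \<union> VB - {x}" "q \<in> VA \<union> VB - {x}"
    moreover obtain z where "z \<in> VA \<inter> VB - {x}"
      using c by (cases "c1 = x") auto
    ultimately show "reach (remove_vertex x (EA \<union># EB)) p q"
      using block_candidate_reach_remove_vertex[OF A] block_candidate_reach_remove_vertex[OF B]
      by (intro reach_through_shared_vertex[of "VA - {x}" "remove_vertex x EA" z
            "VB - {x}" "remove_vertex x EB"]) (auto simp: mem_remove_vertex_iff)
  qed
  then have "\<not> cut_vertex (VA \<union> VB) (EA \<union># EB) x" for x
    by (rule not_cut_vertex_if_reach_remove_vertex[OF con])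
  moreover have "subgraph_of R (VA \<union> VB) (EA \<union># EB)"
    using A B by (auto simp: block_candidate_def subgraph_of_def verts_def intro: subset_mset.sup_least)
  ultimately show ?thesis
    using con by (simp add: block_candidate_def)
qed

lemma block_eq_if_two_shared_verts:
  assumes A: "is_block R A" and B: "is_block R B"
    and c: "c1 \<noteq> c2" "c1 \<in> fst A \<inter> fst B" "c2 \<in> fst A \<inter> fst B"
  shows "A = B"
proof -
  have "block_candidate R (fst A \<union> fst B) (snd A \<union># snd B)"
    using A B by (intro block_candidate_Un[OF _ _ c]) (simp_all add: is_block_def)
  then have "fst A \<union> fst B = fst A \<and> snd A \<union># snd B = snd A"
    "fst A \<union> fst B = fst B \<and> snd A \<union># snd B = snd B"
    using A B unfolding is_block_def
    by (metis sup_ge1 sup_ge2 subset_mset.sup_ge1 subset_mset.sup_ge2)+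
  then show ?thesis by (metis prod_eqI)
qed

text \<open>A block containing a given edge is obtained as a candidate of maximal size containing it.\<close>

lemma edge_in_block:
  assumes e: "Upair v p \<in># R" and vp: "v \<noteq> p"
  obtains H where "is_block R H" "v \<in> fst H" "p \<in> fst H"
proof -
  define P where "P H \<longleftrightarrow> block_candidate R (fst H) (snd H) \<and> v \<in> fst H \<and> Upair v p \<in># snd H" for H
  define f where "f H = card (fst H) + size (snd H)" for H :: "'a set \<times> 'a edge multiset"
  have "P ({v, p}, {#Upair v p#})"
    using block_candidate_edge[OF e vp] by (simp add: P_def)
  moreover have "\<forall>H. P H \<longrightarrow> f H < card (verts R) + size R + 1"
  proof (intro allI impI)
    fix H assume "P H"
    then have "fst H \<subseteq> verts R" "snd H \<subseteq># R"
      by (auto simp: P_def block_candidate_def subgraph_of_def)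
    then show "f H < card (verts R) + size R + 1"
      using card_mono[OF finite_verts] size_mset_mono by (fastforce simp: f_def)
  qed
  ultimately obtain H where PH: "P H" and max: "\<forall>H'. P H' \<longrightarrow> f H' \<le> f H"
    using ex_has_greatest_nat by metis
  have cand: "block_candidate R (fst H) (snd H)"
    using PH by (simp add: P_def)
  have "is_block R H"
    unfolding is_block_def
  proof (rule conjI[OF cand], intro allI impI)
    fix VH' EH' assume H': "block_candidate R VH' EH' \<and> fst H \<subseteq> VH' \<and> snd H \<subseteq># EH'"
    then have "f (VH', EH') \<le> f H"
      using PH max by (auto simp: P_def dest: mset_subset_eqD)
    moreover have fin: "finite VH'"
      using H' finite_verts by (auto simp: block_candidate_def subgraph_of_def intro: finite_subset)
    moreover have "card (fst H) \<le> card VH'" "size (snd H) \<le> size EH'"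
      using H' fin by (simp_all add: card_mono size_mset_mono)
    ultimately have "card (fst H) = card VH'" "size (snd H) = size EH'"
      by (auto simp: f_def)
    then show "VH' = fst H \<and> EH' = snd H"
      using H' fin card_subset_eq[of VH' "fst H"] mset_subset_size[of "snd H" EH']
      by (metis less_irrefl subset_mset.le_imp_less_or_eq)
  qed
  moreover have "p \<in> fst H"
    using PH in_vertsI[of "Upair v p" "snd H" p] cand
    by (auto simp: P_def block_candidate_def subgraph_of_def)
  ultimately show ?thesis
    using that PH by (simp add: P_def)
qed

lemma block_reach_remove_vertex:
  assumes "is_block R H" "p \<in> fst H - {x}" "q \<in> fst H - {x}"
  shows "reach (remove_vertex x R) p q"
proof -
  have cand: "block_candidate R (fst H) (snd H)"
    using assms(1) by (simp add: is_block_def)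
  then have "set_mset (remove_vertex x (snd H)) \<subseteq> set_mset (remove_vertex x R)"
    by (auto simp: block_candidate_def subgraph_of_def mem_remove_vertex_iff dest: mset_subset_eqD)
  with block_candidate_reach_remove_vertex[OF cand assms(2,3)] show ?thesis
    by (rule reach_mono)
qed

lemma neighbour_reach_if_two_blocks:
  assumes two: "card {H. is_block R H \<and> v \<in> fst H} = 2"
    and A: "is_block R A" "v \<in> fst A" and B: "is_block R B" "v \<in> fst B" and "A \<noteq> B"
    and a: "a \<in> fst A - {v}" and b: "b \<in> fst B - {v}"
    and p: "p \<noteq> v" "Upair p v \<in># R"
  shows "reach (remove_vertex v R) p a \<or> reach (remove_vertex v R) p b"
proof -
  let ?Bs = "{H. is_block R H \<and> v \<in> fst H}"
  have "finite ?Bs"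
    using two by (metis card.infinite zero_neq_numeral)
  moreover have "{A, B} \<subseteq> ?Bs" "card {A, B} = card ?Bs"
    using A B two \<open>A \<noteq> B\<close> by auto
  ultimately have Bs: "?Bs = {A, B}"
    using card_subset_eq by blast
  have "Upair v p \<in># R"
    using p(2) by (simp add: Upair_sym)
  then obtain H where H: "is_block R H" "v \<in> fst H" "p \<in> fst H - {v}"
    using edge_in_block p(1) by (metis Diff_iff singletonD)
  then have "H \<in> {A, B}"
    unfolding Bs[symmetric] by simp
  then consider "H = A" | "H = B" by blast
  then show ?thesis
  proof cases
    case 1
    then show ?thesis using block_reach_remove_vertex[OF A(1) _ a] H(3) by simp
  next
    case 2
    then show ?thesis using block_reach_remove_vertex[OF B(1) _ b] H(3) by simp
  qed
qed

subsection \<open>Step (b): shortcutting a path through a cut vertex\<close>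

definition shortcut :: "'v edge multiset \<Rightarrow> 'v \<Rightarrow> 'v \<Rightarrow> 'v \<Rightarrow> 'v edge multiset" where
  "shortcut R a v b = R - {#Upair a v, Upair b v#} + {#Upair a b#}"

lemma shortcut_split:
  assumes "Upair a v \<in># R" "Upair b v \<in># R" "a \<noteq> b"
  obtains R0 where "R = R0 + {#Upair a v, Upair b v#}" "shortcut R a v b = R0 + {#Upair a b#}"
proof -
  obtain R1 where R1: "R = add_mset (Upair a v) R1"
    using multi_member_split[OF assms(1)] by blast
  then have "Upair b v \<in># add_mset (Upair a v) R1"
    using assms(2) by simp
  moreover have "Upair b v \<noteq> Upair a v"
    using assms(3) by auto
  ultimately have "Upair b v \<in># R1"
    by (simp del: Upair_inject)
  then obtain R0 where "R1 = add_mset (Upair b v) R0"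
    by (blast dest: multi_member_split)
  then show ?thesis
    using that[of R0] R1 by (simp add: shortcut_def)
qed

lemma mem_shortcutD: "e \<in># shortcut R a v b \<Longrightarrow> e \<in># R \<or> e = Upair a b"
  by (auto simp: shortcut_def dest: in_diffD)

lemma mem_shortcutI:
  "e \<in># R \<Longrightarrow> v \<notin> set_uprod e \<Longrightarrow> e \<in># shortcut R a v b"
  by (auto simp: shortcut_def in_diff_count)

lemma reach_shortcut_remove_vertex:
  assumes "a \<noteq> v" "b \<noteq> v"
    and "reach (remove_vertex v R) p a \<or> reach (remove_vertex v R) p b"
  shows "reach (remove_vertex v (shortcut R a v b)) p a"
proof -
  have sub: "set_mset (remove_vertex v R) \<subseteq> set_mset (remove_vertex v (shortcut R a v b))"
    by (auto simp: mem_remove_vertex_iff intro: mem_shortcutI)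
  have "Upair b a \<in># remove_vertex v (shortcut R a v b)"
    using assms(1,2) by (simp add: shortcut_def mem_remove_vertex_iff Upair_sym)
  then have ba: "reach (remove_vertex v (shortcut R a v b)) b a"
    by (rule reach_edge)
  from assms(3) show ?thesis
  proof
    assume "reach (remove_vertex v R) p a"
    then show ?thesis using sub by (rule reach_mono)
  next
    assume "reach (remove_vertex v R) p b"
    then have "reach (remove_vertex v (shortcut R a v b)) p b"
      using sub by (rule reach_mono)
    then show ?thesis using ba by (rule reach_trans)
  qed
qed

lemma shortcut_faithful:
  fixes \<omega> :: "'v edge \<Rightarrow> nat"
  assumes edges: "Upair a v \<in># R" "Upair b v \<in># R" and "a \<noteq> v" "b \<noteq> v" "a \<noteq> b"
    and "\<omega> (Upair a b) \<le> \<omega> (Upair a v) + \<omega> (Upair b v)"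
    and linked: "\<And>p. p \<noteq> v \<Longrightarrow> Upair p v \<in># R \<Longrightarrow>
      reach (remove_vertex v R) p a \<or> reach (remove_vertex v R) p b"
  shows "faithful_removal \<omega> R (shortcut R a v b) v"
proof -
  obtain R0 where R: "R = R0 + {#Upair a v, Upair b v#}" and R': "shortcut R a v b = R0 + {#Upair a b#}"
    using shortcut_split[OF edges \<open>a \<noteq> b\<close>] by blast
  have "reach R a b"
    using reach_trans[OF reach_edge[OF edges(1)] reach_sym[OF reach_edge[OF edges(2)]]] .
  then have edges_reach: "reach R p q" if "Upair p q \<in># shortcut R a v b" for p q
    using mem_shortcutD[OF that] reach_edge[of p q R] reach_sym[of R a b] by auto
  show ?thesis
  proof (rule faithful_removalI[where c = a])
    show "verts (shortcut R a v b) - {v} = verts R - {v}"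
      using assms(3,4) by (simp only: R') (auto simp: R verts_def)
    show "(\<Sum>e\<in>#shortcut R a v b. \<omega> e) \<le> (\<Sum>e\<in>#R. \<omega> e)"
      using assms(6) by (simp only: R') (simp add: R)
    show "size (shortcut R a v b) \<le> size R"
      by (simp only: R') (simp add: R)
    show "even (deg (shortcut R a v b) u) \<longleftrightarrow> even (deg R u)" if "u \<noteq> v" for u
      using that assms(3-5) by (simp only: R') (simp add: R deg_def)
    show "reach (remove_vertex v (shortcut R a v b)) p a" if "p \<noteq> v" "Upair p v \<in># R" for p
      using assms(3,4) linked[OF that] by (rule reach_shortcut_remove_vertex)
  qed (use edges_reach mem_shortcutI in auto)
qed

lemma shortcut_extract_a_faithful:
  fixes \<omega> :: "'v edge \<Rightarrow> nat"
  assumes "a \<noteq> v" "b \<noteq> v" and ext: "extract_a E (shortcut R a v b) v R'"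
    and linked: "\<And>p. p \<noteq> v \<Longrightarrow> Upair p v \<in># R \<Longrightarrow>
      reach (remove_vertex v R) p a \<or> reach (remove_vertex v R) p b"
    and triangle: "\<And>x y. x \<noteq> y \<Longrightarrow> Upair x v \<in># R \<Longrightarrow> Upair y v \<in># R \<Longrightarrow>
      \<omega> (Upair x y) \<le> \<omega> (Upair x v) + \<omega> (Upair y v)"
  shows "faithful_removal \<omega> (shortcut R a v b) R' v \<and> v \<notin> verts R'"
proof -
  let ?R'' = "shortcut R a v b"
  have nbrs: "Upair p v \<in># R" if "Upair p v \<in># ?R''" for p
    using mem_shortcutD[OF that] assms(1,2) by auto
  have hub: "a \<in> verts (remove_vertex v ?R'')"
    using assms(1,2) in_vertsI[of "Upair a b" "remove_vertex v ?R''" a]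
    by (simp add: shortcut_def mem_remove_vertex_iff)
  have "reach (remove_vertex v ?R'') p a" if "p \<noteq> v" "Upair p v \<in># ?R''" for p
    using assms(1,2) linked[OF that(1) nbrs[OF that(2)]] by (rule reach_shortcut_remove_vertex)
  moreover have "\<omega> (Upair x y) \<le> \<omega> (Upair x v) + \<omega> (Upair y v)"
    if "x \<noteq> y" "Upair x v \<in># ?R''" "Upair y v \<in># ?R''" for x y
    using triangle[OF that(1) nbrs[OF that(2)] nbrs[OF that(3)]] .
  ultimately show ?thesis
    by (rule extract_a_faithful[OF ext hub])
qed

lemma block_edgeD:
  assumes "is_block R H" "Upair a v \<in># snd H"
  shows "Upair a v \<in># R" "a \<in> fst H"
  using assms in_vertsI[OF assms(2), of a]
  by (auto simp: is_block_def block_candidate_def subgraph_of_def dest: mset_subset_eqD)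

lemma cut_vertex_extraction_faithful:
  fixes \<omega> :: "'v edge \<Rightarrow> nat"
  assumes two: "card {H. is_block R H \<and> v \<in> fst H} = 2"
    and A: "is_block R A" and B: "is_block R B" and "A \<noteq> B"
    and vA: "v \<in> fst A" and vB: "v \<in> fst B"
    and a: "a \<noteq> v" "Upair a v \<in># snd A" and b: "b \<noteq> v" "Upair b v \<in># snd B"
    and result: "(v \<notin> verts (shortcut R a v b) \<and> R' = shortcut R a v b) \<or>
      (v \<in> verts (shortcut R a v b) \<and> extract_a E (shortcut R a v b) v R')"
    and triangle: "\<And>x y. x \<noteq> y \<Longrightarrow> Upair x v \<in># R \<Longrightarrow> Upair y v \<in># R \<Longrightarrow>
      \<omega> (Upair x y) \<le> \<omega> (Upair x v) + \<omega> (Upair y v)"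
  shows "faithful_removal \<omega> R R' v \<and> v \<notin> verts R'"
proof -
  have aR: "Upair a v \<in># R" and bR: "Upair b v \<in># R"
    and aA: "a \<in> fst A - {v}" and bB: "b \<in> fst B - {v}"
    using block_edgeD[OF A a(2)] block_edgeD[OF B b(2)] a(1) b(1) by auto
  have "a \<noteq> b"
  proof
    assume "a = b"
    then have "A = B"
      using block_eq_if_two_shared_verts[OF A B, of a v] aA bB vA vB by auto
    then show False using \<open>A \<noteq> B\<close> by simp
  qed
  have linked: "reach (remove_vertex v R) p a \<or> reach (remove_vertex v R) p b"
    if "p \<noteq> v" "Upair p v \<in># R" for p
    using neighbour_reach_if_two_blocks[OF two A vA B vB \<open>A \<noteq> B\<close> aA bB that] .
  have first: "faithful_removal \<omega> R (shortcut R a v b) v"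
    using triangle[OF \<open>a \<noteq> b\<close> aR bR]
    by (rule shortcut_faithful[OF aR bR a(1) b(1) \<open>a \<noteq> b\<close> _ linked])
  from result show ?thesis
  proof
    assume "v \<in> verts (shortcut R a v b) \<and> extract_a E (shortcut R a v b) v R'"
    then have "faithful_removal \<omega> (shortcut R a v b) R' v \<and> v \<notin> verts R'"
      using shortcut_extract_a_faithful[where \<omega> = \<omega>, OF a(1) b(1) _ linked triangle] by blast
    then show ?thesis
      using faithful_removal_trans[OF first] by blast
  qed (use first in blast)
qed

subsection \<open>Extraction and Eulerian extensions\<close>

lemma extraction_faithful:
  fixes \<omega> :: "'v edge \<Rightarrow> nat"
  assumes "extraction_applicable R v" "extraction_result E R v R'"
    and triangle: "\<And>x y. x \<noteq> y \<Longrightarrow> Upair x v \<in># R \<Longrightarrow> Upair y v \<in># R \<Longrightarrow>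
      \<omega> (Upair x y) \<le> \<omega> (Upair x v) + \<omega> (Upair y v)"
  shows "faithful_removal \<omega> R R' v \<and> v \<notin> verts R'"
proof -
  from assms(2) consider
    (not_cut) "\<not> cut_vertex (verts R) R v" "extract_a E R v R'"
  | (cut) A B a b where "card {H. is_block R H \<and> v \<in> fst H} = 2"
      "is_block R A" "is_block R B" "A \<noteq> B" "v \<in> fst A" "v \<in> fst B"
      "a \<noteq> v" "Upair a v \<in># snd A" "b \<noteq> v" "Upair b v \<in># snd B"
      "(v \<notin> verts (shortcut R a v b) \<and> R' = shortcut R a v b) \<or>
       (v \<in> verts (shortcut R a v b) \<and> extract_a E (shortcut R a v b) v R')"
    unfolding extraction_result_def Let_def shortcut_def[symmetric] by blast
  then show ?thesis
  proof cases
    case not_cut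
    moreover have "3 \<le> card {u \<in> verts R. reach R v u}"
      using assms(1) by (simp add: extraction_applicable_def)
    ultimately show ?thesis
      using not_cut_vertex_extraction_faithful[where \<omega> = \<omega>] triangle by blast
  next
    case cut
    then show ?thesis
      by (rule cut_vertex_extraction_faithful[where \<omega> = \<omega>, OF _ _ _ _ _ _ _ _ _ _ _ triangle])
  qed
qed

text \<open>The vertex \<open>v\<close> is reattached through its neighbour \<open>p\<close>.\<close>

lemma eulerian_iff_if_agree_off_vertex:
  assumes verts: "verts X = verts Y - {v}" and "balanced Y v" "p \<in> verts X" "reach Y v p"
    and reach_iff: "\<And>x y. x \<noteq> v \<Longrightarrow> y \<noteq> v \<Longrightarrow> reach X x y \<longleftrightarrow> reach Y x y"
    and bal_iff: "\<And>x. x \<noteq> v \<Longrightarrow> balanced X x \<longleftrightarrow> balanced Y x"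
  shows "eulerian X \<longleftrightarrow> eulerian Y"
proof
  assume "eulerian X"
  then have conn: "reach X x y" and bal: "balanced X x" if "x \<in> verts X" "y \<in> verts X" for x y
    using that by (auto simp: eulerian_def)
  define g where "g x = (if x = v then p else x)" for x
  have g: "g x \<in> verts X" "g x \<noteq> v" "reach Y x (g x)" if "x \<in> verts Y" for x
    using that assms(3,4) verts by (auto simp: g_def)
  have "reach Y x y" if "x \<in> verts Y" "y \<in> verts Y" for x y
  proof -
    have "reach Y (g x) (g y)"
      using conn[OF g(1) g(1)] reach_iff[OF g(2) g(2)] that by simp
    then show ?thesis
      using reach_trans[OF g(3)[OF that(1)] reach_trans[OF _ reach_sym[OF g(3)[OF that(2)]]]] by blast
  qed
  moreover have "balanced Y x" if "x \<in> verts Y" for x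
    using bal[of x x] bal_iff[of x] assms(2) that verts by (cases "x = v") auto
  ultimately show "eulerian Y"
    by (simp add: eulerian_def)
next
  assume "eulerian Y"
  then show "eulerian X"
    using verts reach_iff bal_iff by (simp add: eulerian_def)
qed

lemma eulerian_plus_iff_if_faithful_removal:
  assumes faithful: "faithful_removal \<omega> R R' v" and "v \<notin> verts R'" "balanced R v"
    and p: "p \<noteq> v" "Upair p v \<in># R" and S: "verts S \<subseteq> verts R'"
  shows "eulerian (R' + S) \<longleftrightarrow> eulerian (R + S)"
proof (rule eulerian_iff_if_agree_off_vertex)
  have verts_R': "verts R' = verts R - {v}"
    using faithful assms(2) by (auto simp: faithful_removal_def)
  then show "verts (R' + S) = verts (R + S) - {v}" "p \<in> verts (R' + S)"
    using S p in_vertsI[OF p(2), of p] by auto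
  have vS: "v \<notin> verts S"
    using S assms(2) by blast
  then show "balanced (R + S) v"
    using assms(3) deg_eq_0_if_notin_verts[OF vS] by (simp add: balanced_def)
  show "reach (R + S) v p"
    using p(2) by (intro reach_edge) (simp add: Upair_sym)
  show "reach (R' + S) x y \<longleftrightarrow> reach (R + S) x y" if "x \<noteq> v" "y \<noteq> v" for x y
    using faithful vS that by (simp add: faithful_removal_def)
  show "balanced (R' + S) x \<longleftrightarrow> balanced (R + S) x" if "x \<noteq> v" for x
    using faithful that by (simp add: faithful_removal_def balanced_def)
qed

theorem mainTheorem14:
  fixes V :: "'v set" and E :: "'v edge set" and \<omega> :: "'v edge \<Rightarrow> nat"
    and R R' :: "'v edge multiset" and v :: 'v
  assumes "metric_instance V E \<omega> R"
    and "extraction_applicable R v"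
    and "extraction_result E R v R'"
  shows "verts R' = verts R - {v} \<and>
      (\<Sum>e\<in>#R'. \<omega> e) \<le> (\<Sum>e\<in>#R. \<omega> e) \<and> size R' \<le> size R \<and>
      (\<forall>u\<in>verts R'. balanced R' u \<longleftrightarrow> balanced R u) \<and>
      (\<forall>u\<in>verts R'. \<forall>w\<in>verts R'. reach R' u w \<longleftrightarrow> reach R u w) \<and>
      (\<forall>S. set_mset S \<subseteq> E \<longrightarrow> verts S \<subseteq> verts R' \<longrightarrow>
           (eulerian_extension E R' S \<longleftrightarrow> eulerian_extension E R S))"
proof -
  have faithful: "faithful_removal \<omega> R R' v \<and> v \<notin> verts R'"
    using extraction_faithful[OF assms(2,3)] metric_instance_triangle[OF assms(1)] by blast
  have "balanced R v" and big: "3 \<le> card {u \<in> verts R. reach R v u}"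
    using assms(2) by (simp_all add: extraction_applicable_def)
  obtain w w' where "w \<in> {u \<in> verts R. reach R v u}" "w' \<in> {u \<in> verts R. reach R v u}"
    "w \<noteq> w'" "w \<noteq> v" "w' \<noteq> v"
    using big by (rule card_ge_3_obtain_two_others)
  then obtain p where p: "p \<noteq> v" "Upair p v \<in># R"
    using reach_from_neighbour[of R v w] by auto
  have "v \<notin> verts {#}"
    by (simp add: verts_def)
  then show ?thesis
    using faithful eulerian_plus_iff_if_faithful_removal[OF _ _ \<open>balanced R v\<close> p]
    by (auto simp: faithful_removal_def balanced_def eulerian_extension_def)
qed

end
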